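(* Let $f:\mathbb R^n\to\mathbb R$ be differentiable with $L$-Lipschitz gradient (w.r.t. $\|\cdot\|_2$). Let $\{x_t\}_{t\ge0}$, $\{L_t\}_{t\ge0}$ be generated by the AC-FW algorithm described in the context, where the damping sequence satisfies Condition (D), let $\eta>1$, and assume $L_0>0$. Then the complement $\mathbb Z_+\setminus\mathcal I_\eta$ is finite (hence $\mathcal I_\eta$ is infinite). Moreover, if $\{k_t\}_{t\ge0}$ denotes the elements of $\mathcal I_\eta$ in increasing order, then for every $t\ge 0$, $$t\le k_t\le t+\left\lfloor \log_\eta\!\left(\frac{L}{rL_0}\right)\right\rfloor .$$
   Context: Let $\mathcal A\subset\mathbb R^n$ be a compact set (the dictionary) and let the feasible set be $\mathcal X=\mathrm{conv}(\mathcal A)$ or $\mathcal X=\mathrm{lin}(\mathcal A)$. For $x\neq y$ let $\ell(x,y):=2|f(y)-f(x)-\nabla f(x)^\top(y-x)|/\|y-x\|_2^2$, and $\ell(x,x):=0$. AC-FW algorithm: given a damping sequence $\{r_t\}_{t\ge0}$ and a direction-finding subroutine, pick $x_{-1}\in\mathcal A$, $x_0\in\arg\min_{v\in\mathcal A}\nabla f(x_{-1})^\top v$, $L_0:=\ell(x_{-1},x_0)$. For $t=0,1,2,\dots$: choose $v_t\in\arg\min_{v\in\mathcal A}\nabla f(x_t)^\top v$; the subroutine returns $d_t\in\mathbb R^n$ and $\gamma_t^{\max}\in(0,\infty]$; set $\gamma_t:=\min\{\nabla f(x_t)^\top d_t/(L_t\|d_t\|_2^2),\gamma_t^{\max}\}$,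 $\bar x_{t+1}:=x_t-\gamma_t d_t$, $L_{t+1}:=\max\{\ell(x_t,\bar x_{t+1}),r_tL_t\}$, and $x_{t+1}:=\bar x_{t+1}$ if $f(\bar x_{t+1})<f(x_t)$, else $x_{t+1}:=x_t$. $\mathbb Z_+$ is the set of nonnegative integers. For $\eta>1$, $\mathcal I_\eta:=\{t\ge0: L_{t+1}\le \eta L_t\}$. Condition (D): $r_t\in(0,1]$ for all $t\ge0$ and $r:=\prod_{t\ge0}r_t\in(0,1]$. *)

theory Defs
  imports "HOL-Analysis.Analysis" "HOL-Library.Infinite_Set"
begin

definition ell :: "('a::euclidean_space \<Rightarrow> real) \<Rightarrow> ('a \<Rightarrow> 'a) \<Rightarrow> 'a \<Rightarrow> 'a \<Rightarrow> real" where
  "ell f grad x y = (if x = y then 0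
     else 2 * \<bar>f y - f x - grad x \<bullet> (y - x)\<bar> / (norm (y - x))^2)"

definition acfw_step :: "('a::euclidean_space \<Rightarrow> 'a) \<Rightarrow> 'a \<Rightarrow> 'a \<Rightarrow> real \<Rightarrow> ereal \<Rightarrow> real" where
  "acfw_step grad xt dt Lt gm =
     real_of_ereal (min (ereal ((grad xt \<bullet> dt) / (Lt * (norm dt)^2))) gm)"

text \<open>The sequences (xm1 = x_{-1}, x, xbar, Ls, v, d, gmax) are generated by AC-FW with
  dictionary A, damping sequence rs, and an arbitrary direction-finding subroutine
  (whose outputs are d t and gmax t).\<close>
definition acfw_run ::
  "'a::euclidean_space set \<Rightarrow> ('a \<Rightarrow> real) \<Rightarrow> ('a \<Rightarrow> 'a) \<Rightarrow> (nat \<Rightarrow> real) \<Rightarrow>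
   'a \<Rightarrow> (nat \<Rightarrow> 'a) \<Rightarrow> (nat \<Rightarrow> 'a) \<Rightarrow> (nat \<Rightarrow> real) \<Rightarrow> (nat \<Rightarrow> 'a) \<Rightarrow>
   (nat \<Rightarrow> 'a) \<Rightarrow> (nat \<Rightarrow> ereal) \<Rightarrow> bool" where
  "acfw_run A f grad rs xm1 x xbar Ls v d gmax \<longleftrightarrow>
     xm1 \<in> A \<and>
     x 0 \<in> A \<and> (\<forall>u\<in>A. grad xm1 \<bullet> x 0 \<le> grad xm1 \<bullet> u) \<and>
     Ls 0 = ell f grad xm1 (x 0) \<and>
     (\<forall>t. v t \<in> A \<and> (\<forall>u\<in>A. grad (x t) \<bullet> v t \<le> grad (x t) \<bullet> u)) \<and>
     (\<forall>t. 0 < gmax t) \<and>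
     (\<forall>t. xbar (Suc t) = x t - acfw_step grad (x t) (d t) (Ls t) (gmax t) *\<^sub>R d t) \<and>
     (\<forall>t. Ls (Suc t) = max (ell f grad (x t) (xbar (Suc t))) (rs t * Ls t)) \<and>
     (\<forall>t. x (Suc t) = (if f (xbar (Suc t)) < f (x t) then xbar (Suc t) else x t))"

definition I_eta :: "real \<Rightarrow> (nat \<Rightarrow> real) \<Rightarrow> nat set" where
  "I_eta \<eta> Ls = {t. Ls (Suc t) \<le> \<eta> * Ls t}"

end

theory Submission
  imports Defs
begin

text \<open>By the descent lemma every curvature estimate ell(x,y) is at most L, so L_t <= L
  for all t. An index outside I_eta multiplies the estimate by more than eta, and any other
  index shrinks it by at most the factor r_t. Hence L_0 r eta^m <= L_T <= L, where m counts
  the indices below T outside I_eta, so m <= floor(log_eta(L/(r L_0))) uniformly in T. The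
  complement of I_eta is therefore finite, and the t-th element k_t of I_eta equals t plus the
  number of complement indices below k_t.\<close>

lemma Lipschitz_gradient_remainder_le:
  fixes f :: "'a::euclidean_space \<Rightarrow> real" and grad :: "'a \<Rightarrow> 'a"
  assumes der: "\<And>y. (f has_derivative (\<lambda>h. grad y \<bullet> h)) (at y)"
    and lip: "\<And>y z. norm (grad y - grad z) \<le> L * norm (y - z)"
  shows "f y - f x - grad x \<bullet> (y - x) \<le> L / 2 * (norm (y - x))\<^sup>2"
proof -
  define h where "h = y - x"
  define g where "g = (\<lambda>s. f (x + s *\<^sub>R h) - s * (grad x \<bullet> h) - L / 2 * s\<^sup>2 * (norm h)\<^sup>2)"
  have "g 1 \<le> g 0"
  proof (rule DERIV_nonpos_imp_nonincreasing[of 0 1, OF zero_le_one])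
    fix s :: real assume s: "0 \<le> s" "s \<le> 1"
    have "((\<lambda>s. x + s *\<^sub>R h) has_derivative (\<lambda>k. k *\<^sub>R h)) (at s)"
      by (auto intro!: derivative_eq_intros)
    from has_derivative_compose[OF this der]
    have "((\<lambda>s. f (x + s *\<^sub>R h)) has_real_derivative (grad (x + s *\<^sub>R h) \<bullet> h)) (at s)"
      by (simp add: o_def has_field_derivative_def mult_commute_abs)
    then have "(g has_real_derivative
        (grad (x + s *\<^sub>R h) - grad x) \<bullet> h - L * s * (norm h)\<^sup>2) (at s)"
      unfolding g_def by (auto intro!: derivative_eq_intros simp: inner_diff_left)
    moreover have "(grad (x + s *\<^sub>R h) - grad x) \<bullet> h \<le> L * s * (norm h)\<^sup>2"
    proof -
      have "(grad (x + s *\<^sub>R h) - grad x) \<bullet> h \<le> norm (grad (x + s *\<^sub>R h) - grad x) * norm h"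
        by (rule norm_cauchy_schwarz)
      also have "\<dots> \<le> L * norm (s *\<^sub>R h) * norm h"
        using lip[of "x + s *\<^sub>R h" x] by (simp add: mult_right_mono)
      also have "\<dots> = L * s * (norm h)\<^sup>2"
        using s by (simp add: power2_eq_square)
      finally show ?thesis .
    qed
    ultimately show "\<exists>y. (g has_real_derivative y) (at s) \<and> y \<le> 0"
      by (intro exI[of _ "(grad (x + s *\<^sub>R h) - grad x) \<bullet> h - L * s * (norm h)\<^sup>2"]) simp
  qed
  then show ?thesis unfolding g_def h_def by (simp add: algebra_simps)
qed

lemma Lipschitz_gradient_abs_remainder_le:
  fixes f :: "'a::euclidean_space \<Rightarrow> real" and grad :: "'a \<Rightarrow> 'a"
  assumes der: "\<And>y. (f has_derivative (\<lambda>h. grad y \<bullet> h)) (at y)"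
    and lip: "\<And>y z. norm (grad y - grad z) \<le> L * norm (y - z)"
  shows "\<bar>f y - f x - grad x \<bullet> (y - x)\<bar> \<le> L / 2 * (norm (y - x))\<^sup>2"
proof -
  have "((\<lambda>y. - f y) has_derivative (\<lambda>h. - grad y \<bullet> h)) (at y)" for y
    using has_derivative_minus[OF der[of y]] by simp
  moreover have "norm (- grad y - - grad z) \<le> L * norm (y - z)" for y z
    using lip[of y z] by (simp add: norm_minus_commute)
  ultimately have "- (f y - f x - grad x \<bullet> (y - x)) \<le> L / 2 * (norm (y - x))\<^sup>2"
    using Lipschitz_gradient_remainder_le[of "\<lambda>y. - f y" "\<lambda>y. - grad y" L y x] by simp
  with Lipschitz_gradient_remainder_le[OF der lip, of y x] show ?thesis
    by linarith
qed

lemma ell_le_Lipschitz_const: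
  fixes f :: "'a::euclidean_space \<Rightarrow> real" and grad :: "'a \<Rightarrow> 'a"
  assumes der: "\<And>y. (f has_derivative (\<lambda>h. grad y \<bullet> h)) (at y)"
    and lip: "\<And>y z. norm (grad y - grad z) \<le> L * norm (y - z)"
  shows "ell f grad x y \<le> L"
proof (cases "x = y")
  case True
  obtain b :: 'a where "b \<in> Basis" using nonempty_Basis by blast
  then have "norm (grad b - grad 0) \<le> L"
    using lip[of b 0] by simp
  then have "0 \<le> L"
    by (metis norm_ge_zero order_trans)
  with True show ?thesis by (simp add: ell_def)
next
  case False
  then show ?thesis
    using Lipschitz_gradient_abs_remainder_le[OF der lip, of y x]
    by (simp add: ell_def divide_le_eq)
qed

lemma acfw_run_Ls_pos:
  assumes "acfw_run A f grad rs xm1 x xbar Ls v d gmax"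
    and "\<And>t. 0 < rs t" and "0 < Ls 0"
  shows "0 < Ls t"
proof (induction t)
  case (Suc t)
  with assms show ?case
    unfolding acfw_run_def by (metis less_max_iff_disj mult_pos_pos)
qed (fact assms(3))

lemma acfw_run_Ls_le:
  fixes f :: "'a::euclidean_space \<Rightarrow> real" and grad :: "'a \<Rightarrow> 'a"
  assumes run: "acfw_run A f grad rs xm1 x xbar Ls v d gmax"
    and der: "\<And>y. (f has_derivative (\<lambda>h. grad y \<bullet> h)) (at y)"
    and lip: "\<And>y z. norm (grad y - grad z) \<le> L * norm (y - z)"
    and rs: "\<And>t. 0 < rs t \<and> rs t \<le> 1" and "0 < Ls 0"
  shows "Ls t \<le> L"
proof (induction t)
  case 0
  with run show ?case
    unfolding acfw_run_def using ell_le_Lipschitz_const[OF der lip] by simp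
next
  case (Suc t)
  have "0 < Ls t"
    by (rule acfw_run_Ls_pos[OF run]) (use rs assms(5) in auto)
  then have "rs t * Ls t \<le> Ls t"
    using rs[of t] by (simp add: mult_le_cancel_right1)
  with Suc run show ?case
    unfolding acfw_run_def using ell_le_Lipschitz_const[OF der lip] by simp
qed

lemma has_prod_le_prod_lessThan:
  fixes rs :: "nat \<Rightarrow> real"
  assumes "rs has_prod r" and "\<And>t. 0 \<le> rs t \<and> rs t \<le> 1"
  shows "r \<le> prod rs {..<T}"
  using has_prod_le[OF assms(1) has_prod_If_finite_set[of "{..<T}" rs]] assms(2) by simp

lemma damped_sequence_jumps_lower_bound:
  fixes Ls rs :: "nat \<Rightarrow> real"
  assumes "0 \<le> Ls 0" and "0 \<le> \<eta>"
    and rs: "\<And>t. 0 \<le> rs t \<and> rs t \<le> 1"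
    and damped: "\<And>t. rs t * Ls t \<le> Ls (Suc t)"
  shows "Ls 0 * \<eta> ^ card ({..<T} - I_eta \<eta> Ls) * prod rs {..<T} \<le> Ls T"
proof (induction T)
  case (Suc T)
  define P where "P = Ls 0 * \<eta> ^ card ({..<T} - I_eta \<eta> Ls) * prod rs {..<T}"
  have "0 \<le> P" unfolding P_def using assms by (simp add: prod_nonneg)
  show ?case
  proof (cases "T \<in> I_eta \<eta> Ls")
    case True
    then have "{..<Suc T} - I_eta \<eta> Ls = {..<T} - I_eta \<eta> Ls"
      by (auto simp: less_Suc_eq)
    then have "Ls 0 * \<eta> ^ card ({..<Suc T} - I_eta \<eta> Ls) * prod rs {..<Suc T} = P * rs T"
      unfolding P_def by (simp add: ac_simps)
    also have "\<dots> \<le> Ls T * rs T" using Suc.IH rs[of T] unfolding P_def by (simp add: mult_right_mono)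
    also have "\<dots> \<le> Ls (Suc T)" using damped[of T] by (simp add: mult.commute)
    finally show ?thesis .
  next
    case False
    then have "{..<Suc T} - I_eta \<eta> Ls = insert T ({..<T} - I_eta \<eta> Ls)"
      by (auto simp: less_Suc_eq)
    then have "Ls 0 * \<eta> ^ card ({..<Suc T} - I_eta \<eta> Ls) * prod rs {..<Suc T} = \<eta> * P * rs T"
      unfolding P_def by (simp add: ac_simps)
    also have "\<dots> \<le> \<eta> * P" using \<open>0 \<le> P\<close> \<open>0 \<le> \<eta>\<close> rs[of T] by (simp add: mult_left_le)
    also have "\<dots> \<le> \<eta> * Ls T" using Suc.IH \<open>0 \<le> \<eta>\<close> unfolding P_def by (simp add: mult_left_mono)
    also have "\<dots> \<le> Ls (Suc T)" using False unfolding I_eta_def by simp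
    finally show ?thesis .
  qed
qed simp

lemma card_jumps_le_floor_log:
  fixes Ls rs :: "nat \<Rightarrow> real"
  assumes "0 < Ls 0" and "1 < \<eta>" and "0 < r"
    and rs: "\<And>t. 0 \<le> rs t \<and> rs t \<le> 1"
    and damped: "\<And>t. rs t * Ls t \<le> Ls (Suc t)"
    and r_le: "\<And>T. r \<le> prod rs {..<T}"
    and bounded: "\<And>t. Ls t \<le> B"
  shows "int (card ({..<T} - I_eta \<eta> Ls)) \<le> \<lfloor>log \<eta> (B / (r * Ls 0))\<rfloor>"
proof -
  define m where "m = card ({..<T} - I_eta \<eta> Ls)"
  have "Ls 0 * \<eta> ^ m * r \<le> Ls 0 * \<eta> ^ m * prod rs {..<T}"
    using r_le[of T] assms(1,2) by (simp add: mult_left_mono)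
  also have "\<dots> \<le> Ls T"
    unfolding m_def using assms(1,2) rs damped by (intro damped_sequence_jumps_lower_bound) auto
  also have "\<dots> \<le> B"
    by (rule bounded)
  finally have "\<eta> ^ m \<le> B / (r * Ls 0)"
    using assms(1,3) by (simp add: pos_le_divide_eq ac_simps)
  then have "real m \<le> log \<eta> (B / (r * Ls 0))"
    using assms(2) by (rule le_log_of_power)
  then show ?thesis unfolding m_def by (simp add: le_floor_iff)
qed

lemma finite_complement_if_card_lessThan_diff_bounded:
  fixes S :: "nat set"
  assumes "\<And>T. card ({..<T} - S) \<le> K"
  shows "finite (UNIV - S)"
proof (rule ccontr)
  assume "infinite (UNIV - S)"
  from infinite_arbitrarily_large[OF this, of "Suc K"]
  obtain F where F: "finite F" "F \<subseteq> UNIV - S" "card F = Suc K"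
    by (elim exE conjE)
  have "F \<subseteq> {..<Suc (Max F)} - S"
  proof
    fix i assume "i \<in> F"
    with F(1,2) show "i \<in> {..<Suc (Max F)} - S"
      by (auto simp: less_Suc_eq_le)
  qed
  then have "card F \<le> card ({..<Suc (Max F)} - S)"
    by (intro card_mono) simp_all
  with F(3) assms[of "Suc (Max F)"] show False
    by simp
qed

lemma enumerate_eq_add_card_lessThan_diff:
  fixes S :: "nat set"
  assumes "infinite S"
  shows "enumerate S n = n + card ({..<enumerate S n} - S)"
proof -
  define k where "k = enumerate S n"
  have "S \<inter> {..<k} = enumerate S ` {..<n}"
  proof safe
    fix i assume "i \<in> S" "i < k"
    then obtain j where "enumerate S j = i" using enumerate_Ex[OF assms] by blast
    with \<open>i < k\<close> assms show "i \<in> enumerate S ` {..<n}" unfolding k_def by auto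
  qed (use assms enumerate_in_set in \<open>auto simp: k_def\<close>)
  then have "card (S \<inter> {..<k}) = n"
    using inj_enumerate[OF assms] by (simp add: card_image inj_on_subset)
  moreover have "card (S \<inter> {..<k} \<union> ({..<k} - S)) = card (S \<inter> {..<k}) + card ({..<k} - S)"
    by (rule card_Un_disjoint) auto
  moreover have "S \<inter> {..<k} \<union> ({..<k} - S) = {..<k}"
    by blast
  ultimately show ?thesis unfolding k_def by simp
qed

theorem lemma3:
  fixes A :: "'a::euclidean_space set" and f :: "'a \<Rightarrow> real" and grad :: "'a \<Rightarrow> 'a"
    and L :: real and rs :: "nat \<Rightarrow> real" and r :: real and \<eta> :: real
    and xm1 :: 'a and x xbar v d :: "nat \<Rightarrow> 'a" and Ls :: "nat \<Rightarrow> real"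
    and gmax :: "nat \<Rightarrow> ereal"
  assumes "compact A"
    and "\<And>y. (f has_derivative (\<lambda>h. grad y \<bullet> h)) (at y)"
    and "\<And>y z. norm (grad y - grad z) \<le> L * norm (y - z)"
    and "acfw_run A f grad rs xm1 x xbar Ls v d gmax"
    and "\<And>t. 0 < rs t \<and> rs t \<le> 1"
    and "rs has_prod r" and "0 < r" and "r \<le> 1"
    and "\<eta> > 1"
    and "Ls 0 > 0"
  shows "finite (UNIV - I_eta \<eta> Ls) \<and> infinite (I_eta \<eta> Ls) \<and>
         (\<forall>t. t \<le> enumerate (I_eta \<eta> Ls) t \<and>
              real (enumerate (I_eta \<eta> Ls) t) \<le> real t + of_int \<lfloor>log \<eta> (L / (r * Ls 0))\<rfloor>)"
proof -
  define I where "I = I_eta \<eta> Ls"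
  define K where "K = \<lfloor>log \<eta> (L / (r * Ls 0))\<rfloor>"
  have rs: "\<And>t. 0 \<le> rs t \<and> rs t \<le> 1" using assms(5) less_imp_le by blast
  have damped: "\<And>t. rs t * Ls t \<le> Ls (Suc t)" using assms(4) unfolding acfw_run_def by simp
  have jumps: "int (card ({..<T} - I)) \<le> K" for T
    unfolding I_def K_def
    using card_jumps_le_floor_log[OF assms(10,9,7) rs damped
        has_prod_le_prod_lessThan[OF assms(6) rs] acfw_run_Ls_le[OF assms(4,2,3,5,10)]] .
  then have fin: "finite (UNIV - I)"
    by (intro finite_complement_if_card_lessThan_diff_bounded[of _ "nat K"]) (metis nat_int nat_mono)
  then have inf: "infinite I"
    by (metis Diff_infinite_finite infinite_UNIV_nat)
  have "real (enumerate I t) \<le> real t + of_int K" for t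
    using enumerate_eq_add_card_lessThan_diff[OF inf, of t] jumps[of "enumerate I t"] by simp
  with fin inf le_enumerate[OF inf] show ?thesis
    unfolding I_def K_def by blast
qed

end
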